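(* Let $n,d\ge 1$. Let $W=(w_{i,j})$ and $\widetilde W=(\tilde w_{i,j})$ be real $n\times n$ matrices and let $G,\widetilde G$ be real $nd\times nd$ block matrices with $d\times d$ blocks $G_{i,j},\widetilde G_{i,j}$. Suppose that for some $\varepsilon,\eta\ge 0$, $$\sup_{i,j}|\tilde w_{i,j}-w_{i,j}|\le \varepsilon,\qquad \sup_{i,j}\|\widetilde G_{i,j}-G_{i,j}\|_F\le \eta,$$ and that there is $C>0$ with $0\le w_{i,j}\le C$ for all $i,j$, $\sup_{i,j}\|G_{i,j}\|_F\le C$ and $\sup_{i,j}\|\widetilde G_{i,j}\|_F\le C$. If $\inf_i \frac1n\sum_{j\neq i}w_{i,j}>\gamma$ and $\gamma>\varepsilon$, then $$\|L(W,G)-L(\widetilde W,\widetilde G)\|_{op}\le \frac{1}{\gamma}C(\eta+\varepsilon)+\frac{\varepsilon}{\gamma(\gamma-\varepsilon)}C^2 .$$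
   Context: For an $n\times n$ matrix $W=(w_{i,j})$ and an $nd\times nd$ block matrix $G$ with $d\times d$ blocks $G_{i,j}$, define $S$ as the $nd\times nd$ block matrix with blocks $S_{i,j}=w_{i,j}G_{i,j}$, and $D$ as the $nd\times nd$ block-diagonal matrix with diagonal blocks $D_{i,i}=\big(\sum_{j\neq i}w_{i,j}\big)\mathrm{I}_d$ (assumed invertible). Then $L(W,G):=D^{-1}S$. $\|\cdot\|_{op}$ is the largest singular value and $\|\cdot\|_F$ the Frobenius norm. *)

theory Defs
  imports "HOL-Analysis.Analysis"
begin

text \<open>An nd x nd block matrix is represented with row/column index type 'n \<times> 'd:
  entry ((i,a),(j,b)) is entry (a,b) of the d x d block (i,j).\<close>

definition block :: "real^('n::finite \<times> 'd::finite)^('n \<times> 'd) \<Rightarrow> 'n \<Rightarrow> 'n \<Rightarrow> real^'d^'d" where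
  "block G i j = (\<chi> a b. G $ (i,a) $ (j,b))"

definition frob_norm :: "real^'d::finite^'d \<Rightarrow> real" where
  "frob_norm A = sqrt (\<Sum>a\<in>UNIV. \<Sum>b\<in>UNIV. (A $ a $ b)^2)"

definition op_norm :: "real^'m::finite^'m \<Rightarrow> real" where
  "op_norm M = onorm (\<lambda>x. M *v x)"

definition S_mat :: "real^'n::finite^'n \<Rightarrow> real^('n \<times> 'd::finite)^('n \<times> 'd) \<Rightarrow> real^('n \<times> 'd)^('n \<times> 'd)" where
  "S_mat W G = (\<chi> p q. W $ fst p $ fst q * G $ p $ q)"

definition D_mat :: "real^'n::finite^'n \<Rightarrow> real^('n \<times> 'd::finite)^('n \<times> 'd)" where
  "D_mat W = (\<chi> p q. if p = q then (\<Sum>j\<in>UNIV - {fst p}. W $ fst p $ j) else 0)"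

definition L_mat :: "real^'n::finite^'n \<Rightarrow> real^('n \<times> 'd::finite)^('n \<times> 'd) \<Rightarrow> real^('n \<times> 'd)^('n \<times> 'd)" where
  "L_mat W G = matrix_inv (D_mat W) ** S_mat W G"

end

(*
  With d_i the off-diagonal row sums of W (and d'_i those of W'), L(W,G) scales block (i,j)
  of G by w_ij / d_i, so L(W,G) - L(W',G') splits blockwise into three terms with coefficients
  -w_ij / d_i on G'_ij - G_ij, -(w'_ij - w_ij) / d_i on G'_ij, and
  w'_ij (d'_i - d_i) / (d_i d'_i) on G'_ij.  The operator norm is bounded by the Frobenius norm,
  and d_i > n gamma bounds the first two terms by C eta / gamma and eps C / gamma.  In the third
  term |d'_i - d_i| <= (n-1) eps, and the row sum of the w'_ij^2 is bounded both by
  n (C + eps)^2 and by a linear function of d_i and d'_i - d_i; a case analysis on the sign of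
  d'_i - d_i shows that each row contributes at most eps^2 C^4 / (n gamma^2 (gamma - eps)^2)
  to the squared Frobenius norm.
*)
theory Submission
  imports Defs
begin

definition row_degree :: "real^'n::finite^'n \<Rightarrow> 'n \<Rightarrow> real" where
  "row_degree W i = (\<Sum>j\<in>UNIV - {i}. W $ i $ j)"

definition scale_blocks ::
  "('n \<Rightarrow> 'n \<Rightarrow> real) \<Rightarrow> real^('n::finite \<times> 'd::finite)^('n \<times> 'd) \<Rightarrow> real^('n \<times> 'd)^('n \<times> 'd)" where
  "scale_blocks c K = (\<chi> p q. c (fst p) (fst q) * K $ p $ q)"

text \<open>In these lemmas N is the number of rows, x the row degree of W, dl its change under
  the perturbation and S the squared row sum of the perturbed weights; the hypotheses on S are
  those proved in sum_sq_row_le_card and sum_sq_row_le_linear.\<close>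

lemma perturbed_square_le_linear:
  fixes w t C e :: real
  assumes "0 \<le> w" "w \<le> C" "\<bar>t\<bar> \<le> e"
  shows "(w + t)^2 \<le> (C - 2*e)*w + 2*C*t + e^2 + 2*C*e"
proof -
  have "0 \<le> (C - w)*(w + 2*t + 2*e)" using assms by (intro mult_nonneg_nonneg) auto
  moreover have "t^2 \<le> e^2" using power_mono[OF assms(3) abs_ge_zero, of 2] by simp
  moreover have "(C - 2*e)*w + 2*C*t + e^2 + 2*C*e - (w + t)^2 = (C - w)*(w + 2*t + 2*e) + (e^2 - t^2)"
    by (simp add: power2_eq_square algebra_simps)
  ultimately show ?thesis by linarith
qed

lemma cubic_le_for_ge_2:
  fixes N :: real
  assumes "N \<ge> 2"
  shows "(N-1)^2 * (N+12) \<le> 4*N^3"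
proof -
  define t where "t = N - 2"
  have "4*N^3 - (N-1)^2 * (N+12) = 3*t^3 + 8*t^2 + 19*t + 18"
    by (simp add: t_def power2_eq_square power3_eq_cube algebra_simps)
  moreover have "0 \<le> t" using assms by (simp add: t_def)
  then have "0 \<le> 3*t^3 + 8*t^2 + 19*t + 18" by simp
  ultimately show ?thesis by linarith
qed

lemma quadratic_row_estimate_small_perturbation:
  fixes N C e x :: real
  assumes N: "N \<ge> 2" and e: "0 \<le> e" "2*e \<le> C" and C: "C > 0" and x: "x \<le> (N-1)*C"
  shows "(N-1)^2 * ((C-2*e)*x + (N-1)*e^2 + (C+e)^2) \<le> N^3 * C^2"
proof -
  have "(C-2*e)*x \<le> (C-2*e)*((N-1)*C)" using e x by (intro mult_left_mono) auto
  moreover have "e^2 \<le> C*e/2" using mult_left_mono[OF e(2) e(1)] by (simp add: power2_eq_square algebra_simps)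
  moreover have "(N-1)*e^2 \<le> (N-1)*(C*e/2)" using N \<open>e^2 \<le> C*e/2\<close> by (intro mult_left_mono) auto
  ultimately have "(C-2*e)*x + (N-1)*e^2 + (C+e)^2 \<le> N*C^2 + C*e*(4 - 3/2*N)"
    by (simp add: power2_eq_square algebra_simps)
  also have "\<dots> \<le> N*C^2 + C*e" using N C e mult_left_mono[of "4 - 3/2*N" 1 "C*e"] by simp
  also have "\<dots> \<le> (N+1/2)*C^2" using e C by (simp add: power2_eq_square algebra_simps)
  finally have "(N-1)^2 * ((C-2*e)*x + (N-1)*e^2 + (C+e)^2) \<le> (N-1)^2 * ((N+1/2)*C^2)"
    by (rule mult_left_mono) simp
  also have "\<dots> = (N^3 - 3/2*N^2 + 1/2) * C^2" by (simp add: power2_eq_square power3_eq_cube algebra_simps)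
  also have "\<dots> \<le> N^3 * C^2" using N mult_mono[of 2 N 2 N] by (intro mult_right_mono) (auto simp: power2_eq_square)
  finally show ?thesis .
qed

lemma quadratic_row_estimate_large_perturbation:
  fixes N C e x :: real
  assumes N: "N \<ge> 2" and e: "e \<le> C" "C < 2*e" and C: "C > 0" and x: "N*e \<le> x"
  shows "(N-1)^2 * ((C-2*e)*x + (N-1)*e^2 + (C+e)^2) \<le> N^3 * C^2"
proof -
  have "(C-2*e)*x \<le> (C-2*e)*(N*e)" using e x by (intro mult_left_mono_neg) auto
  moreover have "4*(e*(C-e)) \<le> C^2"
    using zero_le_power2[of "C-2*e"] by (simp add: power2_eq_square algebra_simps)
  moreover have "C*e \<le> C*C" using e C by simp
  ultimately have "(C-2*e)*x + (N-1)*e^2 + (C+e)^2 \<le> N*(e*(C-e)) + 3*C^2"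
    by (simp add: power2_eq_square algebra_simps)
  also have "\<dots> \<le> (N/4+3)*C^2"
    using mult_left_mono[OF \<open>4*(e*(C-e)) \<le> C^2\<close>, of N] N by (simp add: algebra_simps)
  finally have "(N-1)^2 * ((C-2*e)*x + (N-1)*e^2 + (C+e)^2) \<le> (N-1)^2 * ((N/4+3)*C^2)"
    by (rule mult_left_mono) simp
  also have "\<dots> = ((N-1)^2*(N+12)/4) * C^2" by (simp add: power2_eq_square algebra_simps)
  also have "\<dots> \<le> N^3 * C^2" using cubic_le_for_ge_2[OF N] by (intro mult_right_mono) auto
  finally show ?thesis .
qed

lemma quadratic_row_estimate:
  fixes N C e x :: real
  assumes N: "N \<ge> 2" and e: "0 \<le> e" "e \<le> C" and C: "C > 0" and x: "N*e \<le> x" "x \<le> (N-1)*C"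
  shows "(N-1)^2 * ((C-2*e)*x + (N-1)*e^2 + (C+e)^2) \<le> N^3 * C^2"
  using quadratic_row_estimate_small_perturbation[OF N e(1) _ C x(2)]
    quadratic_row_estimate_large_perturbation[OF N e(2) _ C x(1)]
  by fastforce

lemma degree_shift_estimate:
  fixes N C e x :: real
  assumes N: "N \<ge> 2" and e: "0 \<le> e" and C: "C > 0" and x: "0 \<le> x" "x \<le> (N-1)*C"
  shows "(N-1)*(C+e)*(x-N*e) \<le> N*C*x"
proof -
  have "(N-1)*e*x - C*x \<le> N*(N-1)*e*(C+e)"
  proof (cases "(N-1)*e \<le> C")
    case True
    have "(N-1)*e*x \<le> C*x" using True x by (intro mult_right_mono) auto
    moreover have "0 \<le> N*(N-1)*e*(C+e)" using N e C by simp
    ultimately show ?thesis by linarith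
  next
    case False
    have "x*((N-1)*e - C) \<le> ((N-1)*C)*((N-1)*e - C)" using False x by (intro mult_right_mono) auto
    moreover have "(N-1)*((N-1)*C*e - C^2) \<le> (N-1)*(N*C*e + N*e^2)"
    proof (intro mult_left_mono)
      have "(N-1)*C*e \<le> N*C*e" using C e by (simp add: mult_right_mono)
      moreover have "0 \<le> N*e^2" using N by simp
      moreover have "0 \<le> C^2" by simp
      ultimately show "(N-1)*C*e - C^2 \<le> N*C*e + N*e^2" by linarith
    qed (use N in auto)
    ultimately show ?thesis by (simp add: algebra_simps power2_eq_square)
  qed
  then show ?thesis by (simp add: algebra_simps)
qed

lemma row_estimate_degree_increase:
  fixes N C e x dl S :: real
  assumes N: "N \<ge> 2" and e: "e \<ge> 0" and C: "C > 0" and x: "N*e < x" "x \<le> (N-1)*C"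
    and dl: "0 \<le> dl" "dl \<le> (N-1)*e" and S: "S \<le> N*(C+e)^2"
  shows "dl^2 * S * (x-N*e)^2 \<le> N^3*e^2*C^2*(x+dl)^2"
proof -
  have "0 \<le> N*e" using N e by simp
  then have h1: "(N-1)*(C+e)*(x-N*e) \<le> N*C*x"
    using x by (intro degree_shift_estimate[OF N e C]) auto
  have nn: "0 \<le> (C+e)*(x-N*e)" using C e x by simp
  have "dl*((C+e)*(x-N*e)) \<le> ((N-1)*e)*((C+e)*(x-N*e))" using dl nn by (intro mult_right_mono) auto
  also have "\<dots> = e*((N-1)*(C+e)*(x-N*e))" by (simp add: algebra_simps)
  also have "\<dots> \<le> e*(N*C*x)" using h1 e by (intro mult_left_mono) auto
  also have "\<dots> \<le> N*e*C*(x+dl)" using dl N e C by (simp add: algebra_simps)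
  finally have "(dl*(C+e)*(x-N*e))^2 \<le> (N*e*C*(x+dl))^2"
    using dl nn by (intro power_mono) (auto simp: mult.assoc)
  have "dl^2 * S * (x-N*e)^2 \<le> dl^2 * (N*(C+e)^2) * (x-N*e)^2"
    using S by (intro mult_right_mono mult_left_mono) auto
  also have "\<dots> = N * (dl*(C+e)*(x-N*e))^2" by (simp add: power_mult_distrib)
  also have "\<dots> \<le> N * (N*e*C*(x+dl))^2" using \<open>(dl*(C+e)*(x-N*e))^2 \<le> _\<close> N by (intro mult_left_mono) auto
  also have "\<dots> = N^3*e^2*C^2*(x+dl)^2" by (simp add: power_mult_distrib power2_eq_square power3_eq_cube)
  finally show ?thesis .
qed

lemma row_estimate_degree_decrease:
  fixes N C e x s S :: real
  assumes N: "N \<ge> 2" and e: "0 \<le> e" "e \<le> C" and C: "C > 0" and x: "N*e < x" "x \<le> (N-1)*C"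
    and s: "0 \<le> s" "s \<le> (N-1)*e"
    and S: "0 \<le> S" "S \<le> (C-2*e)*x + 2*C*((N-1)*e - s) + (N-1)*e^2 + (C+e)^2"
  shows "s^2 * S * (x-N*e)^2 \<le> N^3*e^2*C^2*(x-s)^2"
proof -
  define u where "u = (N-1)*e - s"
  define z where "z = x - N*e"
  define Q where "Q = (C-2*e)*x + (N-1)*e^2 + (C+e)^2"
  have u0: "0 \<le> u" using s by (simp add: u_def)
  have "0 \<le> N*e" using N e by simp
  then have z0: "0 \<le> z" "z \<le> (N-1)*C" using x by (auto simp: z_def)
  have SQ: "S \<le> Q + 2*C*u" using S(2) by (simp add: Q_def u_def algebra_simps)
  have Q: "(N-1)^2 * Q \<le> N^3*C^2" unfolding Q_def
    by (rule quadratic_row_estimate[OF N e C]) (use x in auto)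
  have zz: "(N-1)^2 * z \<le> N^3 * C"
  proof -
    have "(N-1)^2 * z \<le> (N-1)^2 * ((N-1)*C)" using z0 by (intro mult_left_mono) auto
    also have "\<dots> = (N-1)^3 * C" by (simp add: power2_eq_square power3_eq_cube)
    also have "\<dots> \<le> N^3 * C" using C N by (intro mult_right_mono power_mono) auto
    finally show ?thesis .
  qed
  have "s^2 * S * (x-N*e)^2 \<le> ((N-1)*e)^2 * (Q + 2*C*u) * z^2"
    using s SQ S z0 by (intro mult_right_mono mult_mono power_mono) (auto simp: z_def)
  also have "\<dots> = e^2 * ((N-1)^2 * Q * z^2 + 2*C*u*z*((N-1)^2*z))"
    by (simp add: power2_eq_square algebra_simps)
  also have "\<dots> \<le> e^2 * (N^3*C^2*z^2 + 2*C*u*z*(N^3*C))"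
  proof (rule mult_left_mono, rule add_mono)
    show "(N-1)^2 * Q * z^2 \<le> N^3*C^2*z^2" using Q by (intro mult_right_mono) auto
    show "2*C*u*z*((N-1)^2*z) \<le> 2*C*u*z*(N^3*C)" using zz C u0 z0 by (intro mult_left_mono) auto
  qed auto
  also have "\<dots> \<le> e^2 * (N^3*C^2*(z+e+u)^2)"
  proof (intro mult_left_mono)
    have "z^2 + 2*u*z \<le> (z+e+u)^2" using u0 z0 e by (simp add: power2_eq_square algebra_simps)
    then have "N^3*C^2*(z^2 + 2*u*z) \<le> N^3*C^2*(z+e+u)^2" using N by (intro mult_left_mono) auto
    then show "N^3*C^2*z^2 + 2*C*u*z*(N^3*C) \<le> N^3*C^2*(z+e+u)^2" by (simp add: algebra_simps power2_eq_square)
  qed auto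
  also have "\<dots> = N^3*e^2*C^2*(x-s)^2" by (simp add: z_def u_def algebra_simps)
  finally show ?thesis .
qed

lemma row_estimate:
  fixes N C e x dl S :: real
  assumes N: "N \<ge> 2" and e: "e \<ge> 0" and C: "C > 0" and x: "N*e < x" "x \<le> (N-1)*C"
    and dl: "\<bar>dl\<bar> \<le> (N-1)*e" and S: "0 \<le> S" "S \<le> N*(C+e)^2"
    "S \<le> (C-2*e)*x + 2*C*(dl + (N-1)*e) + (N-1)*e^2 + (C+e)^2"
  shows "dl^2 * S * (x-N*e)^2 \<le> N^3*e^2*C^2*(x+dl)^2"
proof (cases "dl \<ge> 0")
  case True
  then show ?thesis using row_estimate_degree_increase[OF N e C x] dl S by simp
next
  case False
  have "N*e < N*C" using x C by (simp add: algebra_simps)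
  then have "e \<le> C" using N by simp
  then show ?thesis
    using row_estimate_degree_decrease[OF N e _ C x, of "-dl" S] False dl S
    by (simp add: algebra_simps)
qed

lemma cube_div_le_of_degree_gt:
  fixes N e g x :: real
  assumes N: "N > 0" and e: "0 \<le> e" "e < g" and x: "N*g < x"
  shows "N^3 / (x*(x-N*e))^2 \<le> 1 / (N*g^2*(g-e)^2)"
proof -
  have pos: "0 < N*g" "0 < N*(g-e)" using N e by simp_all
  have "N*g \<le> x" "N*(g-e) \<le> x - N*e" using x by (simp_all add: algebra_simps)
  then have "N*g*(N*(g-e)) \<le> x*(x-N*e)" using pos by (intro mult_mono) auto
  then have sq: "(N*g*(N*(g-e)))^2 \<le> (x*(x-N*e))^2" using pos by (intro power_mono) auto
  have "N^3 / (x*(x-N*e))^2 \<le> N^3 / (N*g*(N*(g-e)))^2"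
    by (rule frac_le) (use pos N e sq in simp_all)
  also have "(N*g*(N*(g-e)))^2 = N^3 * (N*g^2*(g-e)^2)"
    by (simp add: power2_eq_square power3_eq_cube algebra_simps)
  finally show ?thesis using N by simp
qed

lemma row_estimate_ratio:
  fixes N C e g x dl S :: real
  assumes N: "N \<ge> 2" and e: "e \<ge> 0" and C: "C > 0" and g: "g > e" and x: "N*g < x" "x \<le> (N-1)*C"
    and dl: "\<bar>dl\<bar> \<le> (N-1)*e" and S: "0 \<le> S" "S \<le> N*(C+e)^2"
    "S \<le> (C-2*e)*x + 2*C*(dl + (N-1)*e) + (N-1)*e^2 + (C+e)^2"
  shows "dl^2 * S / (x^2 * (x+dl)^2) \<le> e^2*C^2/(N*g^2*(g-e)^2)"
proof -
  have "N*e < N*g" using g N by simp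
  then have xe: "N*e < x" using x by linarith
  have P: "dl^2 * S * (x-N*e)^2 \<le> N^3*e^2*C^2*(x+dl)^2"
    by (rule row_estimate[OF N e C xe x(2) dl S])
  have "(N-1)*e \<le> N*e" using e by (simp add: algebra_simps)
  then have pos: "0 < x + dl" "0 < x - N*e" using dl xe by linarith+
  have "dl^2 * S / (x^2 * (x+dl)^2) = dl^2 * S * (x-N*e)^2 / ((x*(x-N*e))^2 * (x+dl)^2)"
    using pos by (simp add: power_mult_distrib)
  also have "\<dots> \<le> N^3*e^2*C^2*(x+dl)^2 / ((x*(x-N*e))^2 * (x+dl)^2)"
    using P by (rule divide_right_mono) simp
  also have "\<dots> = (e^2*C^2) * (N^3 / (x*(x-N*e))^2)"
    using pos by simp
  also have "\<dots> \<le> (e^2*C^2) * (1 / (N*g^2*(g-e)^2))"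
    using cube_div_le_of_degree_gt[of N e g x] N e g x by (intro mult_left_mono) auto
  finally show ?thesis by simp
qed

lemma norm_matrix_sq: "(norm (M::real^'m::finite^'k::finite))^2 = (\<Sum>p\<in>UNIV. \<Sum>q\<in>UNIV. (M$p$q)^2)"
  by (simp add: norm_vec_def L2_set_def sum_nonneg)

lemma norm_matrix_vector_mult_le: "norm ((M::real^'m::finite^'k::finite) *v x) \<le> norm M * norm x"
proof (rule power2_le_imp_le)
  have "(norm (M *v x))^2 = (\<Sum>p\<in>UNIV. ((M$p) \<bullet> x)^2)"
    by (simp add: norm_vec_def L2_set_def sum_nonneg matrix_vector_mult_def inner_vec_def)
  also have "\<dots> \<le> (\<Sum>p\<in>UNIV. (norm (M$p))^2 * (norm x)^2)"
  proof (rule sum_mono)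
    fix p
    have "\<bar>(M$p) \<bullet> x\<bar>^2 \<le> (norm (M$p) * norm x)^2"
      using Cauchy_Schwarz_ineq2 by (intro power_mono) auto
    then show "((M$p) \<bullet> x)^2 \<le> (norm (M$p))^2 * (norm x)^2" by (simp add: power_mult_distrib)
  qed
  also have "\<dots> = (norm M * norm x)^2"
    by (simp add: sum_distrib_right[symmetric] power_mult_distrib norm_vec_def L2_set_def sum_nonneg)
  finally show "(norm (M *v x))^2 \<le> (norm M * norm x)^2" .
qed simp

lemma op_norm_le_norm: "op_norm (M::real^'m::finite^'m) \<le> norm M"
  unfolding op_norm_def by (rule onorm_le) (rule norm_matrix_vector_mult_le)

lemma sum_UNIV_prod: "sum f (UNIV :: ('a::finite \<times> 'b::finite) set) = (\<Sum>i\<in>UNIV. \<Sum>a\<in>UNIV. f (i,a))"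
  by (simp add: sum.cartesian_product flip: UNIV_Times_UNIV)

lemma frob_norm_nonneg: "0 \<le> frob_norm A"
  by (simp add: frob_norm_def sum_nonneg)

lemma frob_norm_block_sq: "(frob_norm (block K i j))^2 = (\<Sum>a\<in>UNIV. \<Sum>b\<in>UNIV. (K$(i,a)$(j,b))^2)"
  by (simp add: frob_norm_def block_def sum_nonneg)

lemma block_diff: "block (A - B) i j = block A i j - block B i j"
  by (simp add: block_def vec_eq_iff)

lemma norm_scale_blocks_sq:
  "(norm (scale_blocks c K))^2 = (\<Sum>i\<in>UNIV. \<Sum>j\<in>UNIV. (c i j)^2 * (frob_norm (block K i j))^2)"
proof -
  have "(norm (scale_blocks c K))^2
      = (\<Sum>i\<in>UNIV. \<Sum>a\<in>UNIV. \<Sum>j\<in>UNIV. \<Sum>b\<in>UNIV. (c i j * K$(i,a)$(j,b))^2)"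
    by (simp add: norm_matrix_sq scale_blocks_def sum_UNIV_prod)
  also have "\<dots> = (\<Sum>i\<in>UNIV. \<Sum>j\<in>UNIV. \<Sum>a\<in>UNIV. \<Sum>b\<in>UNIV. (c i j)^2 * (K$(i,a)$(j,b))^2)"
    by (intro sum.cong refl, subst sum.swap) (simp add: power_mult_distrib)
  also have "\<dots> = (\<Sum>i\<in>UNIV. \<Sum>j\<in>UNIV. (c i j)^2 * (frob_norm (block K i j))^2)"
    by (simp add: frob_norm_block_sq sum_distrib_left)
  finally show ?thesis .
qed

lemma norm_scale_blocks_le:
  assumes "\<And>i j. \<bar>c i j\<bar> \<le> a" "\<And>i j. frob_norm (block K i j) \<le> k"
  shows "norm (scale_blocks c (K :: real^('n::finite \<times> 'd::finite)^('n \<times> 'd))) \<le> real CARD('n) * a * k"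
proof (rule power2_le_imp_le)
  have a0: "0 \<le> a" using assms(1) abs_ge_zero order_trans by blast
  have k0: "0 \<le> k" using assms(2) frob_norm_nonneg order_trans by blast
  have "(norm (scale_blocks c K))^2 \<le> (\<Sum>i\<in>(UNIV::'n set). \<Sum>j\<in>(UNIV::'n set). a^2 * k^2)"
    unfolding norm_scale_blocks_sq
  proof (intro sum_mono mult_mono)
    fix i j
    show "(c i j)^2 \<le> a^2" using power_mono[OF assms(1) abs_ge_zero, of i j 2] by simp
    show "(frob_norm (block K i j))^2 \<le> k^2" using assms(2) frob_norm_nonneg by (intro power_mono)
  qed auto
  also have "\<dots> = (real CARD('n) * a * k)^2" by (simp add: power2_eq_square)
  finally show "(norm (scale_blocks c K))^2 \<le> (real CARD('n) * a * k)^2" .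
  show "0 \<le> real CARD('n) * a * k" using a0 k0 by simp
qed

lemma matrix_inv_diagonal:
  fixes f :: "'m::finite \<Rightarrow> real" assumes f: "\<And>p. f p \<noteq> 0"
  shows "matrix_inv (\<chi> p q. if p = q then f p else 0) = (\<chi> p q. if p = q then 1 / f p else 0)"
proof -
  define A where "A = (\<chi> p q. if p = q then f p else 0)"
  define B where "B = (\<chi> p q. if p = q then 1 / f p else 0)"
  have if_times: "(if P then a else 0) * b = (if P then a * b else 0)"
    "b * (if P then a else 0) = (if P then b * a else 0)" for P and a b :: real
    by simp_all
  have AB: "A ** B = mat 1" "B ** A = mat 1"
    using f by (auto simp: A_def B_def vec_eq_iff matrix_matrix_mult_def mat_def if_times)
  \<comment> \<open>matrix_inv is a SOME-choice with no library facts; B witnesses that the choice succeeds.\<close>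
  have "A ** matrix_inv A = mat 1 \<and> matrix_inv A ** A = mat 1"
    unfolding matrix_inv_def by (rule someI[where x=B]) (use AB in simp)
  then have "B = B ** (A ** matrix_inv A)" by (simp add: matrix_mul_rid)
  also have "\<dots> = matrix_inv A" by (simp add: matrix_mul_assoc AB matrix_mul_lid)
  finally show ?thesis by (simp add: A_def B_def)
qed

lemma L_mat_eq_scale_blocks:
  assumes "\<And>i. row_degree W i \<noteq> 0"
  shows "L_mat W G = scale_blocks (\<lambda>i j. W $ i $ j / row_degree W i) G"
proof -
  have D: "D_mat W = (\<chi> p q. if p = q then row_degree W (fst p) else 0)"
    unfolding D_mat_def row_degree_def by (rule refl)
  have inv: "matrix_inv (D_mat W) = (\<chi> p q. if p = q then 1 / row_degree W (fst p) else 0)"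
    unfolding D by (rule matrix_inv_diagonal) (rule assms)
  have if_times: "(if P then a else 0) * b = (if P then a * b else 0)" for P and a b :: real
    by simp
  show ?thesis
    by (simp add: L_mat_def inv S_mat_def scale_blocks_def vec_eq_iff matrix_matrix_mult_def if_times)
qed

lemma L_mat_diff_decomp:
  assumes "\<And>i. row_degree W i \<noteq> 0" "\<And>i. row_degree W' i \<noteq> 0"
  shows "L_mat W G - L_mat W' G' =
      scale_blocks (\<lambda>i j. - W $ i $ j / row_degree W i) (G' - G)
    + scale_blocks (\<lambda>i j. - (W' $ i $ j - W $ i $ j) / row_degree W i) G'
    + scale_blocks (\<lambda>i j. W' $ i $ j * (row_degree W' i - row_degree W i)
                            / (row_degree W i * row_degree W' i)) G'"
  using assms by (simp add: L_mat_eq_scale_blocks scale_blocks_def vec_eq_iff field_simps)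

lemma card_ge_2_if_row_degree_nonzero:
  fixes W :: "real^'n::finite^'n"
  assumes "row_degree W i \<noteq> 0"
  shows "2 \<le> CARD('n)"
proof (rule ccontr)
  assume "\<not> 2 \<le> CARD('n)"
  then have "card (UNIV :: 'n set) \<le> Suc 0" by simp
  then have "\<forall>a b :: 'n. a = b" by (simp add: card_le_Suc0_iff_eq)
  then have "UNIV - {i} = {}" by blast
  then show False using assms unfolding row_degree_def by (simp only: sum.empty)
qed

lemma real_card_UNIV_remove: "real (card (UNIV - {i::'n::finite})) = real CARD('n) - 1"
  by (simp add: card_Diff_singleton of_nat_diff Suc_leI)

lemma row_degree_le:
  fixes W :: "real^'n::finite^'n"
  assumes "\<And>j. W $ i $ j \<le> C"
  shows "row_degree W i \<le> (real CARD('n) - 1) * C"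
  using sum_bounded_above[of "UNIV - {i}" "\<lambda>j. W $ i $ j" C] assms
  by (simp add: row_degree_def real_card_UNIV_remove)

lemma abs_row_degree_diff_le:
  fixes W W' :: "real^'n::finite^'n"
  assumes "\<And>j. \<bar>W' $ i $ j - W $ i $ j\<bar> \<le> \<epsilon>"
  shows "\<bar>row_degree W' i - row_degree W i\<bar> \<le> (real CARD('n) - 1) * \<epsilon>"
proof -
  have "\<bar>row_degree W' i - row_degree W i\<bar> \<le> (\<Sum>j\<in>UNIV - {i}. \<bar>W' $ i $ j - W $ i $ j\<bar>)"
    unfolding row_degree_def sum_subtractf[symmetric] by (rule sum_abs)
  also have "\<dots> \<le> (real CARD('n) - 1) * \<epsilon>"
    using sum_bounded_above[of "UNIV - {i}" "\<lambda>j. \<bar>W' $ i $ j - W $ i $ j\<bar>" \<epsilon>] assms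
    by (simp add: real_card_UNIV_remove)
  finally show ?thesis .
qed

lemma row_degree_perturbed_pos:
  fixes W W' :: "real^'n::finite^'n"
  assumes "\<And>j. \<bar>W' $ i $ j - W $ i $ j\<bar> \<le> \<epsilon>" "\<epsilon> < \<gamma>"
    and "real CARD('n) * \<gamma> < row_degree W i"
  shows "0 < row_degree W' i"
proof -
  have "0 \<le> \<epsilon>" using assms(1) abs_ge_zero order_trans by blast
  then have "(real CARD('n) - 1) * \<epsilon> \<le> (real CARD('n) - 1) * \<gamma>"
    using assms(2) by (intro mult_left_mono) (auto simp: Suc_leI)
  then show ?thesis using abs_row_degree_diff_le[OF assms(1)] assms(2,3) \<open>0 \<le> \<epsilon>\<close>
    by (simp add: algebra_simps abs_le_iff)
qed

lemma sum_sq_row_le_card: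
  fixes W W' :: "real^'n::finite^'n"
  assumes "\<And>j. \<bar>W' $ i $ j - W $ i $ j\<bar> \<le> \<epsilon>" "\<And>j. 0 \<le> W $ i $ j" "\<And>j. W $ i $ j \<le> C"
  shows "(\<Sum>j\<in>UNIV. (W' $ i $ j)^2) \<le> real CARD('n) * (C + \<epsilon>)^2"
proof -
  have "(W' $ i $ j)^2 \<le> (C + \<epsilon>)^2" for j
  proof -
    have "\<bar>W' $ i $ j\<bar> \<le> C + \<epsilon>" using assms[of j] by (simp add: abs_le_iff)
    then show ?thesis using power_mono[of "\<bar>W' $ i $ j\<bar>" "C + \<epsilon>" 2] by simp
  qed
  then show ?thesis using sum_bounded_above[of UNIV "\<lambda>j. (W' $ i $ j)^2" "(C + \<epsilon>)^2"] by simp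
qed

lemma sum_sq_row_le_linear:
  fixes W W' :: "real^'n::finite^'n"
  assumes "\<And>j. \<bar>W' $ i $ j - W $ i $ j\<bar> \<le> \<epsilon>" "\<And>j. 0 \<le> W $ i $ j" "\<And>j. W $ i $ j \<le> C"
  defines "N \<equiv> real CARD('n)"
  shows "(\<Sum>j\<in>UNIV. (W' $ i $ j)^2) \<le> (C - 2*\<epsilon>) * row_degree W i
           + 2*C*((row_degree W' i - row_degree W i) + (N-1)*\<epsilon>) + (N-1)*\<epsilon>^2 + (C + \<epsilon>)^2"
proof -
  have "(\<Sum>j\<in>UNIV - {i}. (W' $ i $ j)^2)
      \<le> (\<Sum>j\<in>UNIV - {i}. (C - 2*\<epsilon>) * W $ i $ j + 2*C*(W' $ i $ j - W $ i $ j) + (\<epsilon>^2 + 2*C*\<epsilon>))"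
  proof (rule sum_mono)
    fix j
    show "(W' $ i $ j)^2 \<le> (C - 2*\<epsilon>) * W $ i $ j + 2*C*(W' $ i $ j - W $ i $ j) + (\<epsilon>^2 + 2*C*\<epsilon>)"
      using perturbed_square_le_linear[of "W $ i $ j" C "W' $ i $ j - W $ i $ j" \<epsilon>] assms by simp
  qed
  also have "\<dots> = (C - 2*\<epsilon>) * row_degree W i + 2*C*(row_degree W' i - row_degree W i)
                  + (N-1)*(\<epsilon>^2 + 2*C*\<epsilon>)"
    by (simp add: sum.distrib sum_distrib_left[symmetric] row_degree_def sum_subtractf
        real_card_UNIV_remove N_def)
  finally have "(\<Sum>j\<in>UNIV - {i}. (W' $ i $ j)^2) \<le> \<dots>" .
  moreover have "(W' $ i $ i)^2 \<le> (C + \<epsilon>)^2"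
    using power_mono[of "\<bar>W' $ i $ i\<bar>" "C + \<epsilon>" 2] assms(1-3)[of i] by (simp add: abs_le_iff)
  ultimately show ?thesis
    by (simp add: sum.remove[of UNIV i] algebra_simps)
qed

lemma norm_scale_blocks_div_row_degree_le:
  fixes W :: "real^'n::finite^'n" and K :: "real^('n \<times> 'd::finite)^('n \<times> 'd)"
  assumes deg: "\<And>i. real CARD('n) * \<gamma> < row_degree W i" and \<gamma>: "0 < \<gamma>"
    and a: "\<And>i j. \<bar>a i j\<bar> \<le> A" and k: "\<And>i j. frob_norm (block K i j) \<le> k"
  shows "norm (scale_blocks (\<lambda>i j. a i j / row_degree W i) K) \<le> A * k / \<gamma>"
proof -
  have A0: "0 \<le> A" using a abs_ge_zero order_trans by blast
  have N\<gamma>: "0 < real CARD('n) * \<gamma>" using \<gamma> by simp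
  have "\<bar>a i j / row_degree W i\<bar> \<le> A / (real CARD('n) * \<gamma>)" for i j
  proof -
    have "\<bar>a i j / row_degree W i\<bar> = \<bar>a i j\<bar> / row_degree W i" using deg[of i] N\<gamma> by simp
    also have "\<dots> \<le> A / row_degree W i" using a deg[of i] N\<gamma> by (intro divide_right_mono) auto
    also have "\<dots> \<le> A / (real CARD('n) * \<gamma>)" using A0 deg[of i] N\<gamma> by (intro divide_left_mono) auto
    finally show ?thesis .
  qed
  then have "norm (scale_blocks (\<lambda>i j. a i j / row_degree W i) K) \<le> real CARD('n) * (A / (real CARD('n) * \<gamma>)) * k"
    by (rule norm_scale_blocks_le) (rule k)
  then show ?thesis by simp
qed

lemma row_correction_sq_sum_le:
  fixes W W' :: "real^'n::finite^'n"
  assumes \<epsilon>: "0 \<le> \<epsilon>" "\<epsilon> < \<gamma>" and C: "0 < C"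
    and Wd: "\<And>j. \<bar>W' $ i $ j - W $ i $ j\<bar> \<le> \<epsilon>" and W: "\<And>j. 0 \<le> W $ i $ j" "\<And>j. W $ i $ j \<le> C"
    and deg: "real CARD('n) * \<gamma> < row_degree W i"
  shows "(\<Sum>j\<in>UNIV. (W' $ i $ j * (row_degree W' i - row_degree W i)
                         / (row_degree W i * row_degree W' i))^2)
         \<le> \<epsilon>^2 * C^2 / (real CARD('n) * \<gamma>^2 * (\<gamma> - \<epsilon>)^2)"
proof -
  define N where "N = real CARD('n)"
  define x where "x = row_degree W i"
  define dl where "dl = row_degree W' i - row_degree W i"
  define S where "S = (\<Sum>j\<in>UNIV. (W' $ i $ j)^2)"
  have "0 < real CARD('n) * \<gamma>" using \<epsilon> by simp
  then have "0 < x" using deg by (simp add: x_def)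
  then have "2 \<le> N" using card_ge_2_if_row_degree_nonzero[of W i] by (simp add: x_def N_def)
  have "dl^2 * S / (x^2 * (x + dl)^2) \<le> \<epsilon>^2 * C^2 / (N * \<gamma>^2 * (\<gamma> - \<epsilon>)^2)"
  proof (rule row_estimate_ratio[OF \<open>2 \<le> N\<close> \<epsilon>(1) C \<epsilon>(2)])
    show "N * \<gamma> < x" "x \<le> (N-1) * C" using deg row_degree_le[of W i C] W by (simp_all add: N_def x_def)
    show "\<bar>dl\<bar> \<le> (N-1) * \<epsilon>" using abs_row_degree_diff_le[of W' i W \<epsilon>] Wd by (simp add: N_def dl_def)
    show "0 \<le> S" by (simp add: S_def sum_nonneg)
    show "S \<le> N * (C + \<epsilon>)^2" using sum_sq_row_le_card[of W' i W \<epsilon> C] Wd W by (simp add: S_def N_def)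
    show "S \<le> (C - 2*\<epsilon>) * x + 2*C*(dl + (N-1)*\<epsilon>) + (N-1)*\<epsilon>^2 + (C + \<epsilon>)^2"
      using sum_sq_row_le_linear[of W' i W \<epsilon> C] Wd W by (simp add: S_def N_def x_def dl_def)
  qed
  moreover have "(\<Sum>j\<in>UNIV. (W' $ i $ j * dl / (x * (x + dl)))^2) = dl^2 * S / (x^2 * (x + dl)^2)"
  proof -
    have "(w * dl / (x * (x + dl)))^2 = w^2 * (dl^2 / (x^2 * (x + dl)^2))" for w
      by (simp add: power_mult_distrib power_divide)
    then show ?thesis by (simp only: S_def sum_distrib_right[symmetric]) (simp add: field_simps)
  qed
  ultimately show ?thesis by (simp add: N_def x_def dl_def)
qed

lemma norm_degree_correction_le:
  fixes W W' :: "real^'n::finite^'n" and K :: "real^('n \<times> 'd::finite)^('n \<times> 'd)"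
  assumes \<epsilon>: "0 \<le> \<epsilon>" "\<epsilon> < \<gamma>" and C: "0 < C"
    and Wd: "\<And>i j. \<bar>W' $ i $ j - W $ i $ j\<bar> \<le> \<epsilon>" and W: "\<And>i j. 0 \<le> W $ i $ j" "\<And>i j. W $ i $ j \<le> C"
    and K: "\<And>i j. frob_norm (block K i j) \<le> C"
    and deg: "\<And>i. real CARD('n) * \<gamma> < row_degree W i"
  shows "norm (scale_blocks (\<lambda>i j. W' $ i $ j * (row_degree W' i - row_degree W i)
                                     / (row_degree W i * row_degree W' i)) K)
         \<le> \<epsilon> * C^2 / (\<gamma> * (\<gamma> - \<epsilon>))"
proof (rule power2_le_imp_le)
  define c where "c i j = W' $ i $ j * (row_degree W' i - row_degree W i) / (row_degree W i * row_degree W' i)" for i j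
  define N where "N = real CARD('n)"
  have "(norm (scale_blocks c K))^2 = (\<Sum>i\<in>UNIV. \<Sum>j\<in>UNIV. (c i j)^2 * (frob_norm (block K i j))^2)"
    by (rule norm_scale_blocks_sq)
  also have "\<dots> \<le> (\<Sum>i\<in>UNIV. C^2 * (\<Sum>j\<in>UNIV. (c i j)^2))"
  proof (unfold sum_distrib_left, intro sum_mono)
    fix i j
    have "(frob_norm (block K i j))^2 \<le> C^2" using K frob_norm_nonneg by (intro power_mono)
    then show "(c i j)^2 * (frob_norm (block K i j))^2 \<le> C^2 * (c i j)^2"
      by (subst mult.commute) (rule mult_right_mono, simp_all)
  qed
  also have "\<dots> \<le> (\<Sum>i\<in>(UNIV::'n set). C^2 * (\<epsilon>^2 * C^2 / (N * \<gamma>^2 * (\<gamma> - \<epsilon>)^2)))"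
    unfolding c_def N_def using row_correction_sq_sum_le[OF \<epsilon> C Wd W deg]
    by (intro sum_mono mult_left_mono) auto
  also have "\<dots> = N * (C^2 * (\<epsilon>^2 * C^2 / (N * \<gamma>^2 * (\<gamma> - \<epsilon>)^2)))"
    by (simp add: N_def)
  also have "\<dots> = (\<epsilon> * C^2 / (\<gamma> * (\<gamma> - \<epsilon>)))^2"
    by (simp add: N_def power_mult_distrib power_divide)
  finally show "(norm (scale_blocks c K))^2 \<le> (\<epsilon> * C^2 / (\<gamma> * (\<gamma> - \<epsilon>)))^2" .
  show "0 \<le> \<epsilon> * C^2 / (\<gamma> * (\<gamma> - \<epsilon>))" using \<epsilon> by simp
qed

theorem lemma2p1:
  fixes W W' :: "real^'n::finite^'n"
    and G G' :: "real^('n \<times> 'd::finite)^('n \<times> 'd)"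
    and \<epsilon> \<eta> C \<gamma> :: real
  assumes "\<epsilon> \<ge> 0" and "\<eta> \<ge> 0"
    and "\<forall>i j. \<bar>W' $ i $ j - W $ i $ j\<bar> \<le> \<epsilon>"
    and "\<forall>i j. frob_norm (block G' i j - block G i j) \<le> \<eta>"
    and "C > 0"
    and "\<forall>i j. 0 \<le> W $ i $ j \<and> W $ i $ j \<le> C"
    and "\<forall>i j. frob_norm (block G i j) \<le> C"
    and "\<forall>i j. frob_norm (block G' i j) \<le> C"
    and "\<forall>i. (1 / real CARD('n)) * (\<Sum>j\<in>UNIV - {i}. W $ i $ j) > \<gamma>"
    and "\<gamma> > \<epsilon>"
  shows "op_norm (L_mat W G - L_mat W' G')
           \<le> (1 / \<gamma>) * C * (\<eta> + \<epsilon>) + \<epsilon> / (\<gamma> * (\<gamma> - \<epsilon>)) * C^2"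
proof -
  have \<gamma>: "0 < \<gamma>" using assms(1,10) by linarith
  have deg: "real CARD('n) * \<gamma> < row_degree W i" for i
    using assms(9) by (simp add: row_degree_def field_simps)
  have deg_nonzero: "row_degree W i \<noteq> 0" "row_degree W' i \<noteq> 0" for i
  proof -
    have "0 < real CARD('n) * \<gamma>" using \<gamma> by simp
    then show "row_degree W i \<noteq> 0" using deg[of i] by linarith
    show "row_degree W' i \<noteq> 0"
      using row_degree_perturbed_pos[OF _ assms(10) deg, of W' i] assms(3) by auto
  qed
  have "norm (scale_blocks (\<lambda>i j. - W $ i $ j / row_degree W i) (G' - G)) \<le> C * \<eta> / \<gamma>"
    by (rule norm_scale_blocks_div_row_degree_le[OF deg \<gamma>]) (use assms(4,6) in \<open>auto simp: block_diff\<close>)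
  moreover have "norm (scale_blocks (\<lambda>i j. - (W' $ i $ j - W $ i $ j) / row_degree W i) G') \<le> \<epsilon> * C / \<gamma>"
    by (rule norm_scale_blocks_div_row_degree_le[OF deg \<gamma>]) (use assms(3,8) in \<open>auto simp: abs_minus_commute\<close>)
  moreover have "norm (scale_blocks (\<lambda>i j. W' $ i $ j * (row_degree W' i - row_degree W i)
                                     / (row_degree W i * row_degree W' i)) G')
                 \<le> \<epsilon> * C^2 / (\<gamma> * (\<gamma> - \<epsilon>))"
    by (rule norm_degree_correction_le[OF assms(1,10,5) _ _ _ _ deg]) (use assms(3,6,8) in auto)
  ultimately have "norm (L_mat W G - L_mat W' G') \<le> C * \<eta> / \<gamma> + \<epsilon> * C / \<gamma> + \<epsilon> * C^2 / (\<gamma> * (\<gamma> - \<epsilon>))"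
    unfolding L_mat_diff_decomp[OF deg_nonzero] by (intro norm_triangle_le add_mono)
  also have "\<dots> = (1 / \<gamma>) * C * (\<eta> + \<epsilon>) + \<epsilon> / (\<gamma> * (\<gamma> - \<epsilon>)) * C^2"
    by (simp add: add_divide_distrib algebra_simps)
  finally show ?thesis using op_norm_le_norm order_trans by blast
qed

end
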